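(* The set $\{\pi\in\mathcal P:\text{all parts of }\pi\text{ are distinct}\}$ is $\Pi_2$-definable in $\mathbf Y^*=\langle\mathcal P,\le,[1]+[1]\rangle$.
   Context: $\mathcal P$ is the set of all integer partitions, including the empty partition; a partition is a nonincreasing finite sequence of positive integers (its parts). Young's lattice $\mathbf Y=\langle\mathcal P,\le\rangle$ has $(s_1,\dots,s_r)\le(n_1,\dots,n_t)$ iff $r\le t$ and $s_i\le n_i$ for all $i\le r$; $\mathbf Y^*$ is $\mathbf Y$ with a constant symbol for the partition $(1,1)$. A relation is $\Pi_n$-definable if it is defined by a first-order formula in the language $\{\le,(1,1)\}$ in prenex form with $n$ alternating quantifier blocks, the outermost universal, and a quantifier-free matrix. *)

theory Defs
  imports Main
begin

definition partitions :: "nat list set" where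
  "partitions = {xs. sorted_wrt (\<ge>) xs \<and> (\<forall>x\<in>set xs. 0 < x)}"

definition young_le :: "nat list \<Rightarrow> nat list \<Rightarrow> bool" where
  "young_le s n \<longleftrightarrow> length s \<le> length n \<and> (\<forall>i < length s. s ! i \<le> n ! i)"

definition part11 :: "nat list" where
  "part11 = [1, 1]"

datatype trm = Var nat | Cst

datatype qf =
    Le trm trm
  | Eq trm trm
  | Neg qf
  | Conj qf qf
  | Disj qf qf

fun eval_trm :: "(nat \<Rightarrow> nat list) \<Rightarrow> trm \<Rightarrow> nat list" where
  "eval_trm v (Var i) = v i"
| "eval_trm v Cst = part11"

fun eval_qf :: "(nat \<Rightarrow> nat list) \<Rightarrow> qf \<Rightarrow> bool" where
  "eval_qf v (Le s t) = young_le (eval_trm v s) (eval_trm v t)"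
| "eval_qf v (Eq s t) = (eval_trm v s = eval_trm v t)"
| "eval_qf v (Neg f) = (\<not> eval_qf v f)"
| "eval_qf v (Conj f g) = (eval_qf v f \<and> eval_qf v g)"
| "eval_qf v (Disj f g) = (eval_qf v f \<or> eval_qf v g)"

fun all_block :: "nat list \<Rightarrow> ((nat \<Rightarrow> nat list) \<Rightarrow> bool) \<Rightarrow> (nat \<Rightarrow> nat list) \<Rightarrow> bool" where
  "all_block [] K v = K v"
| "all_block (x # xs) K v = (\<forall>p\<in>partitions. all_block xs K (v(x := p)))"

fun ex_block :: "nat list \<Rightarrow> ((nat \<Rightarrow> nat list) \<Rightarrow> bool) \<Rightarrow> (nat \<Rightarrow> nat list) \<Rightarrow> bool" where
  "ex_block [] K v = K v"
| "ex_block (x # xs) K v = (\<exists>p\<in>partitions. ex_block xs K (v(x := p)))"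

text \<open>A prenex formula is a list of quantifier blocks (alternating, the first one
  universal iff the flag is True) followed by a quantifier-free matrix.\<close>
fun sat_prenex :: "bool \<Rightarrow> nat list list \<Rightarrow> qf \<Rightarrow> (nat \<Rightarrow> nat list) \<Rightarrow> bool" where
  "sat_prenex u [] f v = eval_qf v f"
| "sat_prenex u (b # bs) f v =
     (if u then all_block b (sat_prenex False bs f) v
      else ex_block b (sat_prenex True bs f) v)"

definition Pi_definable :: "nat \<Rightarrow> nat list set \<Rightarrow> bool" where
  "Pi_definable n S \<longleftrightarrow>
     (\<exists>bs f. length bs = n \<and>
        (\<forall>v. (\<forall>i. v i \<in> partitions) \<longrightarrow> (sat_prenex True bs f v \<longleftrightarrow> v 0 \<in> S)))"

end

theory Submission
  imports Defs
begin

text \<open>A partition \<open>L\<close> has two equal parts \<open>t\<close> iff for some \<open>k\<close> the rectangle with \<open>k\<close>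
  rows of length \<open>t\<close> lies below \<open>L\<close> while some partition with fewer than \<open>k\<close> rows, all of
  length at most \<open>t + 1\<close>, does not. Each ingredient is first-order in Young's lattice with the
  constant \<open>(1, 1)\<close>: a column is an element whose down-set is a chain and which is comparable
  with \<open>(1, 1)\<close>; the rows \<open>[t]\<close> and \<open>[t + 2]\<close> are linked by two covering relations, the
  upper one not above \<open>(1, 1)\<close>; a rectangle is an element with a unique coatom. So having a
  repeated part is \<open>\<Sigma>\<^sub>2\<close>, and having distinct parts is \<open>\<Pi>\<^sub>2\<close>.\<close>

section \<open>Partitions and Young's order\<close>

lemma Nil_in_partitions [simp]: "[] \<in> partitions"
  by (simp add: partitions_def)

lemma singleton_in_partitions [simp]: "[c] \<in> partitions \<longleftrightarrow> 0 < c"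
  by (simp add: partitions_def)

lemma partitions_nth_pos: "xs \<in> partitions \<Longrightarrow> i < length xs \<Longrightarrow> 0 < xs ! i"
  unfolding partitions_def by auto

lemma partitions_nth_antimono:
  "xs \<in> partitions \<Longrightarrow> i \<le> j \<Longrightarrow> j < length xs \<Longrightarrow> xs ! j \<le> xs ! i"
  unfolding partitions_def by (cases "i = j") (auto simp: sorted_wrt_iff_nth_less)

lemma partitionsI:
  assumes "\<And>i j. i < j \<Longrightarrow> j < length xs \<Longrightarrow> xs ! j \<le> xs ! i"
    and "\<And>i. i < length xs \<Longrightarrow> 0 < xs ! i"
  shows "xs \<in> partitions"
  using assms unfolding partitions_def by (auto simp: sorted_wrt_iff_nth_less in_set_conv_nth)

lemma replicate_in_partitions: "0 < c \<Longrightarrow> replicate k c \<in> partitions"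
  by (rule partitionsI) auto

lemma young_le_replicate_1:
  assumes "y \<in> partitions" "young_le y (replicate n 1)"
  shows "y = replicate (length y) 1"
proof (rule nth_equalityI)
  fix j assume j: "j < length y"
  then have "y ! j \<le> 1" using assms(2) by (auto simp: young_le_def)
  moreover have "0 < y ! j" using partitions_nth_pos[OF assms(1) j] .
  ultimately show "y ! j = replicate (length y) 1 ! j" using j by simp
qed simp

lemma young_le_trans:
  assumes "young_le x y" "young_le y z"
  shows "young_le x z"
  unfolding young_le_def
proof (intro conjI allI impI)
  show "length x \<le> length z" using assms by (simp add: young_le_def)
  fix i assume "i < length x"
  with assms have "x ! i \<le> y ! i" "y ! i \<le> z ! i" by (auto simp: young_le_def)
  then show "x ! i \<le> z ! i" by (rule le_trans)
qed

lemma young_le_antisym: "young_le x y \<Longrightarrow> young_le y x \<Longrightarrow> x = y"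
  unfolding young_le_def by (auto intro!: nth_equalityI intro: le_antisym)

section \<open>Columns, rows and rectangles\<close>

definition chain_below :: "nat list \<Rightarrow> bool" where
  "chain_below K \<longleftrightarrow>
     (\<forall>y\<in>partitions. \<forall>z\<in>partitions. young_le y K \<and> young_le z K \<longrightarrow> young_le y z \<or> young_le z y)"

definition young_covers :: "nat list \<Rightarrow> nat list \<Rightarrow> bool" where
  "young_covers x y \<longleftrightarrow>
     young_le x y \<and> x \<noteq> y \<and> (\<forall>w\<in>partitions. young_le x w \<and> young_le w y \<longrightarrow> w = x \<or> w = y)"

definition greatest_strictly_below :: "nat list \<Rightarrow> nat list \<Rightarrow> bool" where
  "greatest_strictly_below W A \<longleftrightarrow>
     young_le W A \<and> W \<noteq> A \<and> (\<forall>y\<in>partitions. young_le y A \<and> y \<noteq> A \<longrightarrow> young_le y W)"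

lemma column_if_chain_below:
  assumes K: "K \<in> partitions" and chain: "chain_below K"
    and cmp: "young_le K part11 \<or> young_le part11 K"
  shows "K = replicate (length K) 1"
proof -
  have not_2: "\<not> young_le [2] K"
  proof
    assume two: "young_le [2] K"
    from cmp show False
    proof
      assume "young_le K part11"
      with two have "young_le [2] [1, 1]" unfolding part11_def by (rule young_le_trans)
      then show False by (auto simp: young_le_def)
    next
      assume "young_le part11 K"
      moreover have "[2] \<in> partitions" "[1, 1] \<in> partitions" by (simp_all add: partitions_def)
      ultimately have "young_le [2] [1, 1] \<or> young_le [1, 1] [2]"
        using two chain unfolding chain_below_def part11_def by blast
      then show False by (auto simp: young_le_def)
    qed
  qed
  have "young_le K (replicate (length K) 1)"
    unfolding young_le_def
  proof (intro conjI allI impI)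
    fix i assume i: "i < length K"
    then have "K ! i \<le> K ! 0" using partitions_nth_antimono[OF K] by simp
    moreover have "K ! 0 < 2" using not_2 i by (simp add: young_le_def)
    ultimately show "K ! i \<le> replicate (length K) 1 ! i" using i by simp
  qed simp
  then show ?thesis using young_le_replicate_1[OF K] by blast
qed

lemma chain_below_column: "chain_below (replicate n 1)"
  unfolding chain_below_def
proof (intro ballI impI)
  fix y z assume "y \<in> partitions" "z \<in> partitions"
    and "young_le y (replicate n 1) \<and> young_le z (replicate n 1)"
  then have "y = replicate (length y) 1" "z = replicate (length z) 1"
    using young_le_replicate_1 by blast+
  moreover have "young_le (replicate a c) (replicate b c)" if "a \<le> b" for a b c :: nat
    using that by (simp add: young_le_def)
  ultimately show "young_le y z \<or> young_le z y"
    by (metis nat_le_linear)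
qed

lemma young_le_column_iff:
  assumes "Z \<in> partitions"
  shows "young_le (replicate k 1) Z \<longleftrightarrow> k \<le> length Z"
  using partitions_nth_pos[OF assms] by (auto simp: young_le_def Suc_leI)

lemma row_if_not_ge_part11:
  assumes "P \<in> partitions" "\<not> young_le part11 P"
  shows "length P \<le> 1"
proof (rule ccontr)
  assume "\<not> length P \<le> 1"
  then obtain a b r where "P = a # b # r"
    by (cases P; cases "tl P") auto
  with assms(1) have "young_le part11 P"
    by (simp add: partitions_def part11_def young_le_def less_Suc_eq)
  with assms(2) show False ..
qed

lemma young_covers_row:
  assumes x: "x \<in> partitions" and x': "x' \<in> partitions" and row: "length x' \<le> 1"
    and cov: "young_covers x x'"
  shows "length x \<le> 1 \<and> x' = [sum_list x + 1]"
proof -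
  have le: "young_le x x'" and ne: "x \<noteq> x'"
    and between: "\<And>w. w \<in> partitions \<Longrightarrow> young_le x w \<Longrightarrow> young_le w x' \<Longrightarrow> w = x \<or> w = x'"
    using cov unfolding young_covers_def by auto
  have "length x \<le> length x'" using le by (simp add: young_le_def)
  then have "x' \<noteq> []" using ne by auto
  with row obtain m where m: "x' = [m]" by (cases x') auto
  have "0 < m" using x' m by simp
  show ?thesis
  proof (cases x)
    case Nil
    then have "[1] = x \<or> [1] = x'"
      using between[of "[1]"] m \<open>0 < m\<close> by (simp add: young_le_def)
    then show ?thesis using Nil m by auto
  next
    case (Cons p r)
    with le m have "r = []" "p < m" using ne by (auto simp: young_le_def)
    then have "[p + 1] = x \<or> [p + 1] = x'"
      using between[of "[p + 1]"] Cons m by (simp add: young_le_def)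
    then show ?thesis using Cons \<open>r = []\<close> m by auto
  qed
qed

lemma row_of_two_covers:
  assumes "P \<in> partitions" "P1 \<in> partitions" "P2 \<in> partitions"
    and "young_covers P P1" "young_covers P1 P2" "\<not> young_le part11 P2"
  shows "length P \<le> 1 \<and> P2 = [sum_list P + 2]"
proof -
  have "length P1 \<le> 1" "P2 = [sum_list P1 + 1]"
    using young_covers_row[OF assms(2,3) row_if_not_ge_part11[OF assms(3,6)] assms(5)] by simp_all
  moreover have "length P \<le> 1" "P1 = [sum_list P + 1]"
    using young_covers_row[OF assms(1,2) calculation(1) assms(4)] by simp_all
  ultimately show ?thesis by simp
qed

lemma young_covers_singleton: "young_covers [a] [Suc a]"
  unfolding young_covers_def
proof (intro conjI ballI impI)
  fix w assume "young_le [a] w \<and> young_le w [Suc a]"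
  then obtain b where "w = [b]" "a \<le> b" "b \<le> Suc a"
    by (cases w) (auto simp: young_le_def)
  then show "w = [a] \<or> w = [Suc a]" by auto
qed (auto simp: young_le_def)

lemma young_le_of_butlast_and_replicate_last:
  assumes "A \<noteq> []" "young_le (butlast A) W" "young_le (replicate (length A) (last A)) W"
  shows "young_le A W"
  unfolding young_le_def
proof (intro conjI allI impI)
  show "length A \<le> length W" using assms(3) by (simp add: young_le_def)
  fix i assume i: "i < length A"
  show "A ! i \<le> W ! i"
  proof (cases "i < length A - 1")
    case True
    then show ?thesis using assms(2) by (auto simp: young_le_def nth_butlast)
  next
    case False
    then have "i = length A - 1" using i by simp
    then have "A ! i = last A" using assms(1) by (simp add: last_conv_nth)
    then show ?thesis using assms(3) i by (auto simp: young_le_def)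
  qed
qed

lemma rectangle_if_greatest_strictly_below:
  assumes A: "A \<in> partitions" and W: "greatest_strictly_below W A"
  shows "A = replicate (length A) (hd A)"
proof (cases "A = []")
  case False
  have below_W: "\<And>y. y \<in> partitions \<Longrightarrow> young_le y A \<Longrightarrow> y \<noteq> A \<Longrightarrow> young_le y W"
    using W unfolding greatest_strictly_below_def by blast
  have last_le: "last A \<le> A ! i" if "i < length A" for i
    using partitions_nth_antimono[OF A, of i "length A - 1"] that False by (simp add: last_conv_nth)
  have "last A = hd A"
  proof (rule ccontr)
    assume neq: "last A \<noteq> hd A"
    have "young_le (butlast A) W"
    proof (rule below_W)
      show "butlast A \<in> partitions"
        using partitions_nth_antimono[OF A] partitions_nth_pos[OF A]
        by (intro partitionsI) (auto simp: nth_butlast)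
      show "young_le (butlast A) A" by (simp add: young_le_def nth_butlast)
      have "length (butlast A) < length A" using False by simp
      then show "butlast A \<noteq> A" by (metis less_irrefl)
    qed
    moreover have "young_le (replicate (length A) (last A)) W"
    proof (rule below_W)
      show "replicate (length A) (last A) \<in> partitions"
        using partitions_nth_pos[OF A] False by (intro replicate_in_partitions) (simp add: last_conv_nth)
      show "young_le (replicate (length A) (last A)) A"
        using last_le by (simp add: young_le_def)
      show "replicate (length A) (last A) \<noteq> A"
      proof
        assume eq: "replicate (length A) (last A) = A"
        have "hd A = hd (replicate (length A) (last A))" by (simp only: eq)
        with False neq show False by simp
      qed
    qed
    ultimately have "young_le A W" by (rule young_le_of_butlast_and_replicate_last[OF False])
    with W show False unfolding greatest_strictly_below_def using young_le_antisym by blast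
  qed
  show ?thesis
  proof (rule nth_equalityI)
    fix i assume i: "i < length A"
    then have "A ! i \<le> hd A" using partitions_nth_antimono[OF A, of 0 i] False by (simp add: hd_conv_nth)
    with last_le[OF i] \<open>last A = hd A\<close> i show "A ! i = replicate (length A) (hd A) ! i" by simp
  qed simp
qed simp

definition rectangle_minus_corner :: "nat \<Rightarrow> nat \<Rightarrow> nat list" where
  "rectangle_minus_corner n t = replicate (n - 1) t @ (if t = 1 then [] else [t - 1])"

lemma rectangle_minus_corner_in_partitions:
  assumes "0 < t" shows "rectangle_minus_corner n t \<in> partitions"
  using assms unfolding rectangle_minus_corner_def
  by (intro partitionsI) (auto simp: nth_append split: if_splits)

lemma young_le_rectangle_minus_corner:
  assumes y: "y \<in> partitions" and n: "0 < n"
    and le: "young_le y (replicate n t)" and ne: "y \<noteq> replicate n t"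
  shows "young_le y (rectangle_minus_corner n t)"
proof (cases "length y < n")
  case True
  with le show ?thesis
    unfolding young_le_def rectangle_minus_corner_def by (auto simp: nth_append)
next
  case False
  then have ly: "length y = n" using le by (simp add: young_le_def)
  have "\<exists>j<n. y ! j \<noteq> t"
  proof (rule ccontr)
    assume "\<not> (\<exists>j<n. y ! j \<noteq> t)"
    then have "y = replicate n t" using ly by (intro nth_equalityI) auto
    with ne show False ..
  qed
  then obtain j where j: "j < n" "y ! j < t"
    using le ly by (auto simp: young_le_def order_le_neq_trans)
  moreover have "y ! (n - 1) \<le> y ! j"
    using partitions_nth_antimono[OF y, of j "n - 1"] j ly by simp
  ultimately have last: "y ! (n - 1) < t" by simp
  moreover have "0 < y ! (n - 1)" using partitions_nth_pos[OF y] ly n by simp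
  ultimately have "t \<noteq> 1" by simp
  then have shape: "rectangle_minus_corner n t = replicate (n - 1) t @ [t - 1]"
    unfolding rectangle_minus_corner_def by simp
  show ?thesis
    unfolding young_le_def
  proof (intro conjI allI impI)
    show "length y \<le> length (rectangle_minus_corner n t)" using shape ly n by simp
    fix k assume k: "k < length y"
    show "y ! k \<le> rectangle_minus_corner n t ! k"
    proof (cases "k < n - 1")
      case True
      then show ?thesis using le k shape ly by (auto simp: young_le_def nth_append)
    next
      case False
      then have "k = n - 1" using k ly by simp
      then show ?thesis using last shape by (simp add: nth_append)
    qed
  qed
qed

lemma greatest_strictly_below_rectangle:
  assumes n: "0 < n" and t: "0 < t"
  shows "greatest_strictly_below (rectangle_minus_corner n t) (replicate n t)"
  unfolding greatest_strictly_below_def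
proof (intro conjI ballI impI)
  show "young_le (rectangle_minus_corner n t) (replicate n t)"
    using n unfolding young_le_def rectangle_minus_corner_def by (auto simp: nth_append)
  show "rectangle_minus_corner n t \<noteq> replicate n t"
  proof (cases "t = 1")
    case True
    then have "length (rectangle_minus_corner n t) = n - 1"
      unfolding rectangle_minus_corner_def by simp
    then show ?thesis using n by (auto dest: arg_cong[of _ _ length])
  next
    case False
    then have "rectangle_minus_corner n t ! (n - 1) = t - 1"
      unfolding rectangle_minus_corner_def by (simp add: nth_append)
    then show ?thesis using n t False by auto
  qed
next
  fix y assume "y \<in> partitions" and "young_le y (replicate n t) \<and> y \<noteq> replicate n t"
  then show "young_le y (rectangle_minus_corner n t)"
    using young_le_rectangle_minus_corner n by blast
qed

section \<open>Repeated parts\<close>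

lemma not_distinct_if_not_below:
  assumes L: "L \<in> partitions" and rect: "young_le (replicate n t) L"
    and short: "length Z < n" and bounded: "\<forall>i<length Z. Z ! i \<le> Suc t"
    and not_below: "\<not> young_le Z L"
  shows "\<not> distinct L"
proof -
  have "length Z \<le> length L" using rect short by (simp add: young_le_def)
  with not_below obtain i where i: "i < length Z" "L ! i < Z ! i"
    by (auto simp: young_le_def not_le)
  then have i1: "Suc i < n" "Suc i < length L" using short rect by (auto simp: young_le_def)
  have "t \<le> L ! Suc i" using rect i1 by (auto simp: young_le_def)
  moreover have "L ! Suc i \<le> L ! i" using partitions_nth_antimono[OF L] i1 by simp
  moreover have "Z ! i \<le> Suc t" using i bounded by blast
  with i have "L ! i \<le> t" by simp
  ultimately have "L ! i = L ! Suc i" by simp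
  with i1 show ?thesis using nth_eq_iff_index_eq[of L i "Suc i"] by auto
qed

lemma adjacent_equal_parts_if_not_distinct:
  assumes L: "L \<in> partitions" and "\<not> distinct L"
  obtains i where "Suc i < length L" "L ! i = L ! Suc i"
proof -
  obtain i j where ij: "i < length L" "j < length L" "i \<noteq> j" "L ! i = L ! j"
    using assms(2) by (auto simp: distinct_conv_nth)
  obtain a b where ab: "a < b" "b < length L" "L ! a = L ! b"
  proof (cases "i < j")
    case True
    with ij show thesis by (intro that[of i j]) simp_all
  next
    case False
    with ij show thesis by (intro that[of j i]) simp_all
  qed
  have "L ! Suc a \<le> L ! a" "L ! b \<le> L ! Suc a"
    using partitions_nth_antimono[OF L, of a "Suc a"] partitions_nth_antimono[OF L, of "Suc a" b] ab
    by simp_all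
  with ab show thesis by (intro that[of a]) auto
qed

text \<open>A certificate for a repeated part \<open>t\<close> of \<open>L\<close>: \<open>K\<close> is a column of \<open>k\<close> cells, \<open>P\<close> is
  the row \<open>[t]\<close> (or empty when \<open>t = 0\<close>) and \<open>P2 = [t + 2]\<close>, \<open>A\<close> is a rectangle below \<open>L\<close>
  with at least \<open>k\<close> rows of length at least \<open>t\<close>, and \<open>Z\<close> has fewer than \<open>k\<close> rows, all of
  length at most \<open>t + 1\<close>, yet is not below \<open>L\<close>.\<close>
definition repetition_witness ::
  "nat list \<Rightarrow> nat list \<Rightarrow> nat list \<Rightarrow> nat list \<Rightarrow> nat list \<Rightarrow> nat list \<Rightarrow> nat list \<Rightarrow> nat list \<Rightarrow> bool"
where
  "repetition_witness L K P P1 P2 A W Z \<longleftrightarrow>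
     chain_below K \<and> (young_le K part11 \<or> young_le part11 K) \<and>
     young_covers P P1 \<and> young_covers P1 P2 \<and> \<not> young_le part11 P2 \<and>
     greatest_strictly_below W A \<and> young_le K A \<and> young_le P A \<and> young_le A L \<and>
     \<not> young_le K Z \<and> \<not> young_le P2 Z \<and> \<not> young_le Z L"

definition has_repetition_witness :: "nat list \<Rightarrow> bool" where
  "has_repetition_witness L \<longleftrightarrow>
     (\<exists>K\<in>partitions. \<exists>P\<in>partitions. \<exists>P1\<in>partitions. \<exists>P2\<in>partitions.
       \<exists>A\<in>partitions. \<exists>W\<in>partitions. \<exists>Z\<in>partitions. repetition_witness L K P P1 P2 A W Z)"

lemma not_distinct_if_repetition_witness:
  assumes L: "L \<in> partitions" and K: "K \<in> partitions" and P: "P \<in> partitions"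
    and P1: "P1 \<in> partitions" and P2: "P2 \<in> partitions" and A: "A \<in> partitions"
    and Z: "Z \<in> partitions" and wit: "repetition_witness L K P P1 P2 A W Z"
  shows "\<not> distinct L"
proof -
  from wit have chain: "chain_below K" and cmp: "young_le K part11 \<or> young_le part11 K"
    and covers: "young_covers P P1" "young_covers P1 P2" and row: "\<not> young_le part11 P2"
    and coatom: "greatest_strictly_below W A"
    and KA: "young_le K A" and PA: "young_le P A" and AL: "young_le A L"
    and KZ: "\<not> young_le K Z" and P2Z: "\<not> young_le P2 Z" and ZL: "\<not> young_le Z L"
    by (simp_all add: repetition_witness_def)
  define t where "t = sum_list P"
  have P_row: "length P \<le> 1" and P2_eq: "P2 = [t + 2]"
    using row_of_two_covers[OF P P1 P2 covers row] unfolding t_def by simp_all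
  have rectangle: "A = replicate (length A) (hd A)"
    using rectangle_if_greatest_strictly_below[OF A coatom] .
  have "young_le (replicate (length A) t) A"
  proof (cases P)
    case (Cons p r)
    with P_row have "r = []" by simp
    with PA Cons have "A \<noteq> []" "p \<le> A ! 0" by (auto simp: young_le_def)
    then have "t \<le> hd A" using Cons \<open>r = []\<close> by (simp add: t_def hd_conv_nth)
    then have "young_le (replicate (length A) t) (replicate (length A) (hd A))"
      by (simp add: young_le_def)
    then show ?thesis by (simp only: rectangle[symmetric])
  qed (simp add: young_le_def t_def)
  then have rect_below_L: "young_le (replicate (length A) t) L"
    using AL young_le_trans by blast
  have column: "K = replicate (length K) 1"
    using column_if_chain_below[OF K chain cmp] .
  have "\<not> young_le (replicate (length K) 1) Z"
    using KZ by (subst (asm) column)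
  then have "length Z < length K" using young_le_column_iff[OF Z] by simp
  moreover have "length K \<le> length A" using KA by (simp add: young_le_def)
  ultimately have short: "length Z < length A" by simp
  have bounded: "\<forall>i<length Z. Z ! i \<le> Suc t"
  proof (intro allI impI)
    fix i assume i: "i < length Z"
    then have "Z ! i \<le> Z ! 0" using partitions_nth_antimono[OF Z] by simp
    also have "Z ! 0 < t + 2" using P2Z P2_eq i by (auto simp: young_le_def)
    finally show "Z ! i \<le> Suc t" by simp
  qed
  show ?thesis
    using not_distinct_if_not_below[OF L rect_below_L short bounded ZL] .
qed

lemma repetition_witness_if_not_distinct:
  assumes L: "L \<in> partitions" and "\<not> distinct L"
  obtains K P P1 P2 A W Z where
    "K \<in> partitions" "P \<in> partitions" "P1 \<in> partitions" "P2 \<in> partitions"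
    "A \<in> partitions" "W \<in> partitions" "Z \<in> partitions"
    "repetition_witness L K P P1 P2 A W Z"
proof -
  obtain i where i: "Suc i < length L" "L ! i = L ! Suc i"
    using adjacent_equal_parts_if_not_distinct[OF assms] .
  define t where "t = L ! i"
  define n where "n = Suc (Suc i)"
  have n: "Suc i < n" "n \<le> length L" using i by (simp_all add: n_def)
  have t: "0 < t" using partitions_nth_pos[OF L] i unfolding t_def by simp
  have L_ge_t: "\<forall>j<n. t \<le> L ! j"
    using partitions_nth_antimono[OF L, of _ "Suc i"] i unfolding t_def n_def
    by (auto simp: less_Suc_eq_le)
  let ?K = "replicate n 1" and ?A = "replicate n t" and ?Z = "replicate (Suc i) (Suc t)"
  have wit: "repetition_witness L ?K [t] [Suc t] [Suc (Suc t)] ?A (rectangle_minus_corner n t) ?Z"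
    unfolding repetition_witness_def
  proof (intro conjI)
    show "chain_below ?K" by (rule chain_below_column)
    show "young_le ?K part11 \<or> young_le part11 ?K"
      using n unfolding part11_def young_le_def by (auto simp: less_Suc_eq)
    show "young_covers [t] [Suc t]" "young_covers [Suc t] [Suc (Suc t)]"
      by (rule young_covers_singleton)+
    show "\<not> young_le part11 [Suc (Suc t)]" by (simp add: young_le_def part11_def)
    show "greatest_strictly_below (rectangle_minus_corner n t) ?A"
      using n t by (intro greatest_strictly_below_rectangle) simp_all
    show "young_le ?K ?A" "young_le [t] ?A" using n t by (auto simp: young_le_def)
    show "young_le ?A L" using n L_ge_t by (simp add: young_le_def)
    show "\<not> young_le ?K ?Z" using n by (simp add: young_le_def)
    show "\<not> young_le [Suc (Suc t)] ?Z" by (simp add: young_le_def)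
    show "\<not> young_le ?Z L"
    proof
      assume "young_le ?Z L"
      then have "?Z ! i \<le> L ! i" unfolding young_le_def by (metis length_replicate lessI)
      then show False by (simp add: t_def del: replicate.simps)
    qed
  qed
  show thesis
  proof (rule that[OF _ _ _ _ _ _ _ wit])
    show "?K \<in> partitions" "?A \<in> partitions" "?Z \<in> partitions"
      using t by (simp_all only: replicate_in_partitions zero_less_Suc zero_less_one)
  qed (use t rectangle_minus_corner_in_partitions in simp_all)
qed

lemma not_distinct_iff_has_repetition_witness:
  assumes "L \<in> partitions"
  shows "\<not> distinct L \<longleftrightarrow> has_repetition_witness L"
proof
  assume "\<not> distinct L"
  then show "has_repetition_witness L"
    unfolding has_repetition_witness_def by (rule repetition_witness_if_not_distinct[OF assms]) blast
next
  assume "has_repetition_witness L"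
  then show "\<not> distinct L"
    unfolding has_repetition_witness_def using not_distinct_if_repetition_witness[OF assms] by blast
qed

section \<open>The defining formula\<close>

lemma all_block_Not: "all_block b (\<lambda>w. \<not> K w) v \<longleftrightarrow> \<not> ex_block b K v"
  by (induction b arbitrary: v) auto

lemma ex_block_Not: "ex_block b (\<lambda>w. \<not> K w) v \<longleftrightarrow> \<not> all_block b K v"
  by (induction b arbitrary: v) auto

lemma sat_prenex_Neg: "sat_prenex u bs (Neg f) v \<longleftrightarrow> \<not> sat_prenex (\<not> u) bs f v"
proof (induction bs arbitrary: u v)
  case (Cons b bs)
  have "sat_prenex u' bs (Neg f) = (\<lambda>w. \<not> sat_prenex (\<not> u') bs f w)" for u'
    using Cons.IH by blast
  then show ?case by (simp add: all_block_Not ex_block_Not)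
qed simp

definition Imp :: "qf \<Rightarrow> qf \<Rightarrow> qf" where
  "Imp f g = Disj (Neg f) g"

definition Conjs :: "qf list \<Rightarrow> qf" where
  "Conjs fs = foldr Conj fs (Eq Cst Cst)"

lemma eval_qf_Imp [simp]: "eval_qf v (Imp f g) \<longleftrightarrow> (eval_qf v f \<longrightarrow> eval_qf v g)"
  by (simp add: Imp_def)

lemma eval_qf_Conjs [simp]: "eval_qf v (Conjs fs) \<longleftrightarrow> (\<forall>f\<in>set fs. eval_qf v f)"
  by (induction fs) (simp_all add: Conjs_def)

definition chain_below_qf :: "trm \<Rightarrow> trm \<Rightarrow> trm \<Rightarrow> qf" where
  "chain_below_qf k y z = Imp (Conj (Le y k) (Le z k)) (Disj (Le y z) (Le z y))"

definition covers_qf :: "trm \<Rightarrow> trm \<Rightarrow> trm \<Rightarrow> qf" where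
  "covers_qf x y w =
     Conj (Le x y) (Conj (Neg (Eq x y)) (Imp (Conj (Le x w) (Le w y)) (Disj (Eq w x) (Eq w y))))"

definition greatest_strictly_below_qf :: "trm \<Rightarrow> trm \<Rightarrow> trm \<Rightarrow> qf" where
  "greatest_strictly_below_qf w a y =
     Conj (Le w a) (Conj (Neg (Eq w a)) (Imp (Conj (Le y a) (Neg (Eq y a))) (Le y w)))"

text \<open>Variables \<open>0, \<dots>, 7\<close> stand for \<open>L, K, P, P1, P2, A, W, Z\<close> of \<open>repetition_witness\<close>;
  the variables \<open>8\<close> and \<open>9\<close> are quantified universally.\<close>
definition repetition_qf :: qf where
  "repetition_qf = Conjs
     [chain_below_qf (Var 1) (Var 8) (Var 9), Disj (Le (Var 1) Cst) (Le Cst (Var 1)),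
      covers_qf (Var 2) (Var 3) (Var 8), covers_qf (Var 3) (Var 4) (Var 8), Neg (Le Cst (Var 4)),
      greatest_strictly_below_qf (Var 6) (Var 5) (Var 8),
      Le (Var 1) (Var 5), Le (Var 2) (Var 5), Le (Var 5) (Var 0),
      Neg (Le (Var 1) (Var 7)), Neg (Le (Var 4) (Var 7)), Neg (Le (Var 7) (Var 0))]"

lemma all_eval_repetition_qf:
  "(\<forall>y\<in>partitions. \<forall>z\<in>partitions. eval_qf (v(8 := y, 9 := z)) repetition_qf) \<longleftrightarrow>
     repetition_witness (v 0) (v 1) (v 2) (v 3) (v 4) (v 5) (v 6) (v 7)"
  unfolding repetition_qf_def chain_below_qf_def covers_qf_def greatest_strictly_below_qf_def
    repetition_witness_def chain_below_def young_covers_def greatest_strictly_below_def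
  by (auto 0 3 dest: bspec[OF _ Nil_in_partitions])

lemma sat_repetition_qf:
  "sat_prenex False [[1, 2, 3, 4, 5, 6, 7], [8, 9]] repetition_qf v \<longleftrightarrow> has_repetition_witness (v 0)"
  by (simp add: all_eval_repetition_qf has_repetition_witness_def)

theorem proposition3p5:
  shows "Pi_definable 2 {p \<in> partitions. distinct p}"
  unfolding Pi_definable_def
proof (intro exI conjI allI impI)
  fix v :: "nat \<Rightarrow> nat list" assume "\<forall>i. v i \<in> partitions"
  then have "v 0 \<in> partitions" ..
  then show "sat_prenex True [[1, 2, 3, 4, 5, 6, 7], [8, 9]] (Neg repetition_qf) v \<longleftrightarrow>
      v 0 \<in> {p \<in> partitions. distinct p}"
    using not_distinct_iff_has_repetition_witness[OF \<open>v 0 \<in> partitions\<close>, symmetric]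
    by (simp only: sat_prenex_Neg not_True_eq_False sat_repetition_qf) simp
qed simp

end
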